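(* Fix $T>0$ and $\Delta t>0$ with $n=T/\Delta t$ an integer. Let $\widetilde{\mathcal S}_{\Delta t}=\mathcal C_h\circ\mathcal B_h\circ\mathcal A_{\Delta t}\circ\mathcal B_h\circ\mathcal C_h$ ($h=\Delta t/2$) be the discrete split-encoder update with at-most-one-jump likelihood described in the context, and $\mathcal S_{\Delta t}$ the exact one-step filtering semigroup. Assume $L^1$-stability: there is $L\ge0$ such that $\|\mathcal S_{\Delta t}(q_1)-\mathcal S_{\Delta t}(q_2)\|_1\le(1+L\Delta t)\|q_1-q_2\|_1$ for all normalized densities $q_1,q_2$; and assume the intensity of observation jumps larger than $\varepsilon>0$ is uniformly bounded by $\Lambda_\varepsilon$, so that (as in the local error theorem) there are constants $C_1,C_2>0$ independent of $\Delta t$ with $\|\widetilde{\mathcal S}_{\Delta t}(q)-\mathcal S_{\Delta t}(q)\|_1\le C_1\Delta t^2+C_2(\Lambda_\varepsilon\Delta t)^2$ for every normalized density $q$. Then there exists $C_T>0$, independent of $\Delta t$, such that for every normalized density $q$, $$\|\widetilde{\mathcal S}^{\,n}_{\Delta t}(q)-\mathcal S^{\,n}_{\Delta t}(q)\|_1\le C_T(1+\Lambda_\varepsilon^2)\Delta t.$$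
   Context: Setting: a partially observed jump-diffusion $dX_t=\mu(t,X_t,\Theta_t)dt+\sigma(t,X_t,\Theta_t)dW^X_t+\int\gamma(t,z,X_{t^-},\Theta_t)\widetilde N^X(dt,dz)$, $d\Theta_t=a(t,\Theta_t)dt+b(t,\Theta_t)dW^\Theta_t+\int k(t,\Theta_{t^-},z)\widetilde N^\Theta(dt,dz)$ (Brownian motions $W^X,W^\Theta$, compensated Poisson measures with compensators $\nu^X(dz)dt,\nu^\Theta(dz)dt$); only $X$ is observed. $\mathcal S_{\Delta t}$ maps the normalized filter density (conditional law of $\Theta$ given the observation history) at $t_k$ to that at $t_k+\Delta t$ given the observed increment $\Delta X_k$. The discrete update on a latent grid $\{\theta_j\}$ with spacing $\Delta\theta$: $\mathcal A_{\Delta t}$ applies a nonnegative Markov transition kernel $K_{\Delta t}$ (discretizing the generator of $\Theta$) plus a zero-total-mass residual correction, clips negatives to zero and renormalizes; $\mathcal B_h$ multiplies by $\mathcal N(\Delta X_k;\mu_\phi h,\sigma_\phi^2h)$ and renormalizes; $\mathcal C_h$ multiplies by $e^{-\lambda_\phi h}\mathcal N(\Delta X_k;\mu_\phi h,\sigma_\phi^2 h)+he^{-\lambda_\phi h}\int\mathcal N(\Delta X_k;\mu_\phi h+\gamma_\phi(z),\sigma_\phi^2h)\nu^X(dz)$ and renormalizes, where $\mu_\phi,\sigma_\phi,\lambda_\phi,\gamma_\phi$ are given coefficient functions of $(t_k,X_{t_k},\beta_k,\theta_j)$ and $\mathcal N(x;m,v)$ is the Gaussian density. Powers $\mathcal S^n$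 denote $n$-fold composition. *)

theory Defs
  imports "HOL-Analysis.Analysis"
begin

definition norm_density :: "'a measure \<Rightarrow> ('a \<Rightarrow> real) set" where
  "norm_density M = {q. q \<in> borel_measurable M \<and> (\<forall>x\<in>space M. 0 \<le> q x)
                        \<and> integrable M q \<and> integral\<^sup>L M q = 1}"

definition L1_dist :: "'a measure \<Rightarrow> ('a \<Rightarrow> real) \<Rightarrow> ('a \<Rightarrow> real) \<Rightarrow> real" where
  "L1_dist M q1 q2 = (\<integral>x. \<bar>q1 x - q2 x\<bar> \<partial>M)"

end

theory Submission
  imports Defs
begin

text \<open>Lady Windermere's fan: the global error of the scheme after \<open>n\<close> steps is the sum of
  the local errors, each propagated by the remaining exact steps. By \<open>L\<^sup>1\<close>-stability the
  local error committed at step \<open>j\<close> grows by at most \<open>(1 + L \<Delta>t)\<^sup>n \<le> exp (L T)\<close>, so \<open>n\<close> local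
  errors of size \<open>O ((1 + \<Lambda>\<^sup>2) \<Delta>t\<^sup>2)\<close> add up to \<open>O ((1 + \<Lambda>\<^sup>2) \<Delta>t)\<close> because \<open>n \<Delta>t = T\<close>.\<close>

lemma L1_dist_triangle:
  assumes "integrable M f" "integrable M g" "integrable M h"
  shows "L1_dist M f h \<le> L1_dist M f g + L1_dist M g h"
proof -
  have int: "integrable M (\<lambda>x. \<bar>f x - g x\<bar>)" "integrable M (\<lambda>x. \<bar>g x - h x\<bar>)"
    "integrable M (\<lambda>x. \<bar>f x - h x\<bar>)"
    using assms by auto
  have "(\<integral>x. \<bar>f x - h x\<bar> \<partial>M) \<le> (\<integral>x. \<bar>f x - g x\<bar> + \<bar>g x - h x\<bar> \<partial>M)"
    by (rule integral_mono) (use int in auto)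
  also have "\<dots> = (\<integral>x. \<bar>f x - g x\<bar> \<partial>M) + (\<integral>x. \<bar>g x - h x\<bar> \<partial>M)"
    using int(1,2) by (rule Bochner_Integration.integral_add)
  finally show ?thesis
    by (simp add: L1_dist_def)
qed

lemma funpow_closed:
  assumes "\<And>a. a \<in> A \<Longrightarrow> F a \<in> A" "q \<in> A"
  shows "(F ^^ k) q \<in> A"
  by (induction k) (use assms in auto)

lemma funpow_error_accumulation:
  fixes d :: "'b \<Rightarrow> 'b \<Rightarrow> real"
  assumes F_maps: "\<And>a. a \<in> A \<Longrightarrow> F a \<in> A"
    and G_maps: "\<And>a. a \<in> A \<Longrightarrow> G a \<in> A"
    and zero: "\<And>a. a \<in> A \<Longrightarrow> d a a = 0"
    and triangle: "\<And>a b c. a \<in> A \<Longrightarrow> b \<in> A \<Longrightarrow> c \<in> A \<Longrightarrow> d a c \<le> d a b + d b c"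
    and local_err: "\<And>a. a \<in> A \<Longrightarrow> d (F a) (G a) \<le> \<delta>"
    and lipschitz: "\<And>a b. a \<in> A \<Longrightarrow> b \<in> A \<Longrightarrow> d (G a) (G b) \<le> K * d a b"
    and K_nonneg: "K \<ge> 0"
    and q: "q \<in> A"
  shows "d ((F ^^ k) q) ((G ^^ k) q) \<le> \<delta> * (\<Sum>j<k. K ^ j)"
proof (induction k)
  case 0
  show ?case
    using zero[OF q] by simp
next
  case (Suc k)
  let ?a = "(F ^^ k) q" and ?b = "(G ^^ k) q"
  have a: "?a \<in> A" and b: "?b \<in> A"
    using funpow_closed F_maps G_maps q by metis+
  have "d (F ?a) (G ?b) \<le> d (F ?a) (G ?a) + d (G ?a) (G ?b)"
    using triangle F_maps G_maps a b by blast
  also have "\<dots> \<le> \<delta> + K * (\<delta> * (\<Sum>j<k. K ^ j))"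
    using local_err[OF a] lipschitz[OF a b] mult_left_mono[OF Suc.IH K_nonneg] by linarith
  also have "\<dots> = \<delta> * (\<Sum>j<Suc k. K ^ j)"
    by (simp only: sum.lessThan_Suc_shift) (simp add: sum_distrib_left distrib_left mult_ac)
  finally show ?case
    by simp
qed

lemma sum_power_one_plus_le_exp:
  fixes c :: real
  assumes "c \<ge> 0"
  shows "(\<Sum>j<k. (1 + c) ^ j) \<le> real k * exp (c * real k)"
proof -
  have "(1 + c) ^ j \<le> exp (c * real k)" if "j < k" for j
  proof -
    have "(1 + c) ^ j \<le> exp c ^ j"
      using assms by (intro power_mono) (simp_all add: exp_ge_add_one_self)
    also have "\<dots> \<le> exp (c * real k)"
      using assms that by (simp add: exp_of_nat_mult[symmetric] mult.commute mult_left_mono)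
    finally show ?thesis .
  qed
  then have "(\<Sum>j<k. (1 + c) ^ j) \<le> (\<Sum>j<k. exp (c * real k))"
    by (intro sum_mono) simp
  then show ?thesis
    by simp
qed

theorem corollary1:
  fixes M :: "'a measure"
    and S St :: "real \<Rightarrow> ('a \<Rightarrow> real) \<Rightarrow> ('a \<Rightarrow> real)"
    and T L C1 C2 \<Lambda> :: real
  assumes T_pos: "T > 0"
    and L_nonneg: "L \<ge> 0"
    and C1_pos: "C1 > 0" and C2_pos: "C2 > 0"
    and Lambda_nonneg: "\<Lambda> \<ge> 0"
    and S_maps: "\<And>dt q. dt > 0 \<Longrightarrow> q \<in> norm_density M \<Longrightarrow> S dt q \<in> norm_density M"
    and St_maps: "\<And>dt q. dt > 0 \<Longrightarrow> q \<in> norm_density M \<Longrightarrow> St dt q \<in> norm_density M"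
    and stable: "\<And>dt q1 q2. dt > 0 \<Longrightarrow> q1 \<in> norm_density M \<Longrightarrow> q2 \<in> norm_density M \<Longrightarrow>
                   L1_dist M (S dt q1) (S dt q2) \<le> (1 + L * dt) * L1_dist M q1 q2"
    and local_err: "\<And>dt q. dt > 0 \<Longrightarrow> q \<in> norm_density M \<Longrightarrow>
                   L1_dist M (St dt q) (S dt q) \<le> C1 * dt\<^sup>2 + C2 * (\<Lambda> * dt)\<^sup>2"
  shows "\<exists>CT > 0. \<forall>dt > 0. \<forall>n::nat. real n * dt = T \<longrightarrow>
           (\<forall>q \<in> norm_density M.
              L1_dist M ((St dt ^^ n) q) ((S dt ^^ n) q) \<le> CT * (1 + \<Lambda>\<^sup>2) * dt)"
proof (intro exI[of _ "T * (C1 + C2) * exp (L * T)"] conjI allI impI ballI)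
  show "0 < T * (C1 + C2) * exp (L * T)"
    using T_pos C1_pos C2_pos by simp
  fix dt :: real and n :: nat and q
  assume dt: "dt > 0" and n_dt: "real n * dt = T" and q: "q \<in> norm_density M"
  define \<delta> where "\<delta> = C1 * dt\<^sup>2 + C2 * (\<Lambda> * dt)\<^sup>2"
  have \<delta>_le: "\<delta> \<le> (C1 + C2) * (1 + \<Lambda>\<^sup>2) * dt\<^sup>2"
    unfolding \<delta>_def using C1_pos C2_pos by (simp add: algebra_simps power_mult_distrib)
  have "L1_dist M ((St dt ^^ n) q) ((S dt ^^ n) q) \<le> \<delta> * (\<Sum>j<n. (1 + L * dt) ^ j)"
  proof (rule funpow_error_accumulation[where A = "norm_density M"])
    show "L1_dist M a c \<le> L1_dist M a b + L1_dist M b c"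
      if "a \<in> norm_density M" "b \<in> norm_density M" "c \<in> norm_density M" for a b c
      using that by (intro L1_dist_triangle) (simp_all add: norm_density_def)
  qed (use St_maps S_maps stable local_err dt q L_nonneg in \<open>simp_all add: \<delta>_def L1_dist_def\<close>)
  also have "\<dots> \<le> (C1 + C2) * (1 + \<Lambda>\<^sup>2) * dt\<^sup>2 * (real n * exp (L * T))"
    using sum_power_one_plus_le_exp[of "L * dt" n] \<delta>_le L_nonneg dt C1_pos C2_pos n_dt
    by (intro mult_mono) (simp_all add: mult.commute mult.left_commute sum_nonneg)
  also have "\<dots> = T * (C1 + C2) * exp (L * T) * (1 + \<Lambda>\<^sup>2) * dt"
    using n_dt[symmetric] by (simp add: power2_eq_square algebra_simps)
  finally show "L1_dist M ((St dt ^^ n) q) ((S dt ^^ n) q) \<le> T * (C1 + C2) * exp (L * T) * (1 + \<Lambda>\<^sup>2) * dt" .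
qed

end
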